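(* Let $\overline C,\underline C,V,\overline V$ be real numbers with $\overline C>\underline C>0$, $V>0$, $\overline V+V\le\overline C$ and $\underline C<\overline V<\underline C+V$. Let $$\mathcal P_2=\{(x_{t-1},x_t,y_{t-1},y_t)\in\mathbb R_+^2\times\{0,1\}^2:\ -x_i+\underline C y_i\le 0\ (i\in\{t-1,t\}),\ x_i-\overline C y_i\le 0\ (i\in\{t-1,t\}),$$ $$x_t-x_{t-1}\le Vy_{t-1}+\overline V(1-y_{t-1}),\ x_{t-1}-x_t\le Vy_t+\overline V(1-y_t)\},$$ and let $\mathcal Q_2$ be the set of $(x_{t-1},x_t,y_{t-1},y_t)\in\mathbb R^4$ satisfying $y_i\le 1$ and $\underline C y_i\le x_i\le\overline C y_i$ for $i\in\{t-1,t\}$; $x_{t-1}\le\overline V y_{t-1}+(\overline C-\overline V)y_t$; $x_t\le(\overline C-\overline V)y_{t-1}+\overline V y_t$; $x_t-x_{t-1}\le(\underline C+V)y_t-\underline C y_{t-1}$; $x_t-x_{t-1}\le\overline V y_t-(\overline V-V)y_{t-1}$; $x_{t-1}-x_t\le(\underline C+V)y_{t-1}-\underline C y_t$; $x_{t-1}-x_t\le\overline V y_{t-1}-(\overline V-V)y_t$. Then $\mathcal Q_2$ equals the convex hull of $\mathcal P_2$.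
   Context: Here $x_{t-1},x_t,y_{t-1},y_t$ are just the names of four real coordinates (generation amounts and on/off statuses of a generator in two consecutive periods); $\mathbb R_+$ denotes the nonnegative reals. *)

theory Defs
  imports "HOL-Analysis.Analysis"
begin

text \<open>Points are (x_{t-1}, x_t, y_{t-1}, y_t) in real^4, rendered as nested product.\<close>

definition P2 :: "real \<Rightarrow> real \<Rightarrow> real \<Rightarrow> real \<Rightarrow> (real \<times> real \<times> real \<times> real) set" where
  "P2 Cu Cl V Vb = {(x1, x2, y1, y2).
      x1 \<ge> 0 \<and> x2 \<ge> 0 \<and> y1 \<in> {0, 1} \<and> y2 \<in> {0, 1} \<and>
      - x1 + Cl * y1 \<le> 0 \<and> - x2 + Cl * y2 \<le> 0 \<and>
      x1 - Cu * y1 \<le> 0 \<and> x2 - Cu * y2 \<le> 0 \<and>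
      x2 - x1 \<le> V * y1 + Vb * (1 - y1) \<and>
      x1 - x2 \<le> V * y2 + Vb * (1 - y2)}"

definition Q2 :: "real \<Rightarrow> real \<Rightarrow> real \<Rightarrow> real \<Rightarrow> (real \<times> real \<times> real \<times> real) set" where
  "Q2 Cu Cl V Vb = {(x1, x2, y1, y2).
      y1 \<le> 1 \<and> y2 \<le> 1 \<and>
      Cl * y1 \<le> x1 \<and> x1 \<le> Cu * y1 \<and>
      Cl * y2 \<le> x2 \<and> x2 \<le> Cu * y2 \<and>
      x1 \<le> Vb * y1 + (Cu - Vb) * y2 \<and>
      x2 \<le> (Cu - Vb) * y1 + Vb * y2 \<and>
      x2 - x1 \<le> (Cl + V) * y2 - Cl * y1 \<and>
      x2 - x1 \<le> Vb * y2 - (Vb - V) * y1 \<and>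
      x1 - x2 \<le> (Cl + V) * y1 - Cl * y2 \<and>
      x1 - x2 \<le> Vb * y1 - (Vb - V) * y2}"

end

theory Submission
  imports Defs
begin

text \<open>
  \<open>Q2\<close> is an intersection of halfspaces containing \<open>P2\<close>, hence contains its convex hull.
  Conversely, a point \<open>(x1, x2, y1, y2)\<close> of \<open>Q2\<close> with \<open>y2 \<le> y1\<close> is the convex combination,
  with weights \<open>1 - y1\<close>, \<open>y1 - y2\<close> and \<open>y2\<close>, of the off state \<open>0\<close>, a shut-down state
  \<open>(a, 0, 1, 0)\<close> with \<open>Cl \<le> a \<le> Vb\<close>, and a state \<open>(b1, b2, 1, 1)\<close> with \<open>\<bar>b1 - b2\<bar> \<le> V\<close>.
  Here \<open>x2\<close> determines \<open>b2\<close>, and the inequalities of \<open>Q2\<close> say precisely that \<open>x1\<close> lies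
  between the endpoints of the interval \<open>(y1 - y2) [Cl, Vb] + y2 [max Cl (b2 - V), min Cu (b2 + V)]\<close>.
  The case \<open>y1 \<le> y2\<close> is the same with the two periods exchanged (start-up instead of shut-down).
\<close>

lemma factor_in_Icc_obtain:
  fixes x y lo hi :: real
  assumes "lo \<le> hi" "0 \<le> y" "y * lo \<le> x" "x \<le> y * hi"
  obtains b where "b \<in> {lo..hi}" "x = y * b"
proof -
  have "continuous_on {lo..hi} (\<lambda>b. y * b)"
    by (intro continuous_intros)
  then show thesis
    using IVT'[of "\<lambda>b. y * b" lo x hi] assms that by auto
qed

lemma weighted_sum_in_Icc_obtain:
  fixes x p q a0 a1 c0 c1 :: real
  assumes "a0 \<le> a1" "c0 \<le> c1" "0 \<le> p" "0 \<le> q"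
    and "p * a0 + q * c0 \<le> x" "x \<le> p * a1 + q * c1"
  obtains a c where "a \<in> {a0..a1}" "c \<in> {c0..c1}" "x = p * a + q * c"
proof -
  define f where "f z = p * fst z + q * snd z" for z :: "real \<times> real"
  have "connected (f ` ({a0..a1} \<times> {c0..c1}))"
    unfolding f_def by (intro connected_continuous_image connected_Times connected_Icc continuous_intros)
  moreover have "f (a0, c0) \<in> f ` ({a0..a1} \<times> {c0..c1})" "f (a1, c1) \<in> f ` ({a0..a1} \<times> {c0..c1})"
    using assms(1,2) by auto
  moreover have "f (a0, c0) \<le> x" "x \<le> f (a1, c1)"
    using assms(5,6) by (simp_all add: f_def)
  ultimately have "x \<in> f ` ({a0..a1} \<times> {c0..c1})"
    unfolding connected_iff_interval by blast
  then obtain z where "z \<in> {a0..a1} \<times> {c0..c1}" "x = f z"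
    by blast
  then show thesis
    using that[of "fst z" "snd z"] by (auto simp: f_def)
qed

lemma nonneg_if_between_multiples:
  fixes a b x y :: real
  assumes "a < b" "a * y \<le> x" "x \<le> b * y"
  shows "0 \<le> y"
proof -
  have "0 \<le> (b - a) * y"
    using assms(2,3) by (simp add: algebra_simps)
  then show ?thesis
    using assms(1) by (simp add: zero_le_mult_iff)
qed

lemma convex_Q2: "convex (Q2 Cu Cl V Vb)"
proof -
  have "Q2 Cu Cl V Vb =
      {z. (0, 0, 1, 0) \<bullet> z \<le> 1} \<inter> {z. (0, 0, 0, 1) \<bullet> z \<le> 1} \<inter>
      {z. (-1, 0, Cl, 0) \<bullet> z \<le> 0} \<inter> {z. (1, 0, -Cu, 0) \<bullet> z \<le> 0} \<inter>
      {z. (0, -1, 0, Cl) \<bullet> z \<le> 0} \<inter> {z. (0, 1, 0, -Cu) \<bullet> z \<le> 0} \<inter>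
      {z. (1, 0, -Vb, Vb - Cu) \<bullet> z \<le> 0} \<inter> {z. (0, 1, Vb - Cu, -Vb) \<bullet> z \<le> 0} \<inter>
      {z. (-1, 1, Cl, -Cl - V) \<bullet> z \<le> 0} \<inter> {z. (-1, 1, Vb - V, -Vb) \<bullet> z \<le> 0} \<inter>
      {z. (1, -1, -Cl - V, Cl) \<bullet> z \<le> 0} \<inter> {z. (1, -1, -Vb, Vb - V) \<bullet> z \<le> 0}"
    (is "_ = ?H")
  proof (rule set_eqI)
    show "z \<in> Q2 Cu Cl V Vb \<longleftrightarrow> z \<in> ?H" for z
      by (cases z) (auto simp: Q2_def algebra_simps)
  qed
  then show ?thesis
    by (simp add: convex_Int convex_halfspace_le)
qed

lemma P2_subset_Q2:
  fixes Cu Cl V Vb :: real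
  assumes "Cl \<ge> 0" "V \<ge> 0" "Vb \<le> Cu" "Vb < Cl + V"
  shows "P2 Cu Cl V Vb \<subseteq> Q2 Cu Cl V Vb"
  using assms by (auto simp: P2_def Q2_def)

lemma convex_hull_P2_subset_Q2:
  fixes Cu Cl V Vb :: real
  assumes "Cl \<ge> 0" "V \<ge> 0" "Vb \<le> Cu" "Vb < Cl + V"
  shows "convex hull (P2 Cu Cl V Vb) \<subseteq> Q2 Cu Cl V Vb"
  using P2_subset_Q2[OF assms] convex_Q2 by (rule hull_minimal)

lemma Q2_decomposition:
  fixes Cu Cl V Vb x1 x2 y1 y2 :: real
  assumes "Cl \<le> Cu" "Cl \<le> Vb" "0 \<le> V" "0 \<le> y2" "y2 \<le> y1"
    and "Cl * y1 \<le> x1" "Cl * y2 \<le> x2" "x2 \<le> Cu * y2"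
    and "x1 \<le> Vb * y1 + (Cu - Vb) * y2"
    and "x2 - x1 \<le> (Cl + V) * y2 - Cl * y1"
    and "x1 - x2 \<le> Vb * y1 - (Vb - V) * y2"
  obtains a b1 b2 where "a \<in> {Cl..Vb}" "b1 \<in> {Cl..Cu}" "b2 \<in> {Cl..Cu}" "\<bar>b1 - b2\<bar> \<le> V"
    and "x1 = (y1 - y2) * a + y2 * b1" "x2 = y2 * b2"
proof -
  obtain b2 where b2: "b2 \<in> {Cl..Cu}" "x2 = y2 * b2"
    using factor_in_Icc_obtain[of Cl Cu y2 x2] assms by (auto simp: mult.commute)
  define lo where "lo = max Cl (b2 - V)"
  define hi where "hi = min Cu (b2 + V)"
  have "lo \<le> hi"
    using b2 assms(1,3) by (auto simp: lo_def hi_def)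
  moreover have "y2 * lo = max (Cl * y2) (x2 - V * y2)" "y2 * hi = min (Cu * y2) (x2 + V * y2)"
    using b2(2) assms(4) by (simp_all add: lo_def hi_def max_mult_distrib_left min_mult_distrib_left algebra_simps)
  then have "(y1 - y2) * Cl + y2 * lo \<le> x1" "x1 \<le> (y1 - y2) * Vb + y2 * hi"
    using assms(6-11) by (auto simp: algebra_simps)
  ultimately obtain a b1 where "a \<in> {Cl..Vb}" "b1 \<in> {lo..hi}" "x1 = (y1 - y2) * a + y2 * b1"
    using weighted_sum_in_Icc_obtain[of Cl Vb lo hi "y1 - y2" y2 x1] assms(2,4,5) by auto
  moreover have "b1 \<in> {Cl..Cu}" "\<bar>b1 - b2\<bar> \<le> V"
    using \<open>b1 \<in> {lo..hi}\<close> by (auto simp: lo_def hi_def)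
  ultimately show thesis
    using that b2 by blast
qed

lemma convex_hull_3_mem:
  assumes "p \<in> S" "q \<in> S" "r \<in> S" "0 \<le> u" "0 \<le> v" "0 \<le> w" "u + v + w = 1"
  shows "u *\<^sub>R p + v *\<^sub>R q + w *\<^sub>R r \<in> convex hull S"
proof -
  have "u *\<^sub>R p + v *\<^sub>R q + w *\<^sub>R r \<in> convex hull {p, q, r}"
    unfolding convex_hull_3 using assms(4-7) by blast
  also have "convex hull {p, q, r} \<subseteq> convex hull S"
    using assms(1-3) by (intro hull_mono) auto
  finally show ?thesis .
qed

lemma Q2_mem_convex_hull_P2_if_shutdown:
  fixes Cu Cl V Vb x1 x2 y1 y2 :: real
  assumes "0 \<le> Cl" "Cl < Cu" "Cl \<le> Vb" "Vb \<le> Cu" "0 \<le> V"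
    and q: "(x1, x2, y1, y2) \<in> Q2 Cu Cl V Vb" and "y2 \<le> y1"
  shows "(x1, x2, y1, y2) \<in> convex hull (P2 Cu Cl V Vb)"
proof -
  have "0 \<le> y2"
    using nonneg_if_between_multiples[of Cl Cu y2 x2] assms(2) q by (simp add: Q2_def)
  obtain a b1 b2 where ab: "a \<in> {Cl..Vb}" "b1 \<in> {Cl..Cu}" "b2 \<in> {Cl..Cu}" "\<bar>b1 - b2\<bar> \<le> V"
    "x1 = (y1 - y2) * a + y2 * b1" "x2 = y2 * b2"
    by (rule Q2_decomposition[of Cl Cu Vb V y2 y1 x1 x2])
      (use assms \<open>0 \<le> y2\<close> in \<open>auto simp: Q2_def\<close>)
  have "0 \<in> P2 Cu Cl V Vb" "(a, 0, 1, 0) \<in> P2 Cu Cl V Vb" "(b1, b2, 1, 1) \<in> P2 Cu Cl V Vb"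
    using ab assms by (auto simp: P2_def zero_prod_def)
  then have "(1 - y1) *\<^sub>R 0 + (y1 - y2) *\<^sub>R (a, 0, 1, 0) + y2 *\<^sub>R (b1, b2, 1, 1)
      \<in> convex hull (P2 Cu Cl V Vb)"
    using \<open>0 \<le> y2\<close> \<open>y2 \<le> y1\<close> q by (intro convex_hull_3_mem) (auto simp: Q2_def)
  then show ?thesis
    using ab by simp
qed

definition swap_periods :: "real \<times> real \<times> real \<times> real \<Rightarrow> real \<times> real \<times> real \<times> real" where
  "swap_periods = (\<lambda>(x1, x2, y1, y2). (x2, x1, y2, y1))"

lemma swap_periods_apply [simp]: "swap_periods (x1, x2, y1, y2) = (x2, x1, y2, y1)"
  by (simp add: swap_periods_def)

lemma swap_periods_involution [simp]: "swap_periods (swap_periods z) = z"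
  by (cases z) simp

lemma linear_swap_periods: "linear swap_periods"
  by (auto simp: linear_iff swap_periods_def split: prod.splits)

lemma swap_periods_mem_P2: "z \<in> P2 Cu Cl V Vb \<Longrightarrow> swap_periods z \<in> P2 Cu Cl V Vb"
  by (cases z) (auto simp: P2_def)

lemma swap_periods_mem_Q2: "z \<in> Q2 Cu Cl V Vb \<Longrightarrow> swap_periods z \<in> Q2 Cu Cl V Vb"
  by (cases z) (auto simp: Q2_def)

lemma swap_periods_image_convex_hull_P2:
  "swap_periods ` (convex hull (P2 Cu Cl V Vb)) = convex hull (P2 Cu Cl V Vb)"
proof -
  have "swap_periods ` P2 Cu Cl V Vb = P2 Cu Cl V Vb"
    by (metis swap_periods_mem_P2 swap_periods_involution image_eqI image_subsetI subsetI subset_antisym)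
  then show ?thesis
    using convex_hull_linear_image[OF linear_swap_periods] by metis
qed

lemma Q2_subset_convex_hull_P2:
  fixes Cu Cl V Vb :: real
  assumes "0 \<le> Cl" "Cl < Cu" "Cl \<le> Vb" "Vb \<le> Cu" "0 \<le> V"
  shows "Q2 Cu Cl V Vb \<subseteq> convex hull (P2 Cu Cl V Vb)"
proof clarify
  fix x1 x2 y1 y2
  assume q: "(x1, x2, y1, y2) \<in> Q2 Cu Cl V Vb"
  consider "y2 \<le> y1" | "y1 \<le> y2"
    by linarith
  then show "(x1, x2, y1, y2) \<in> convex hull (P2 Cu Cl V Vb)"
  proof cases
    case 1
    then show ?thesis
      using Q2_mem_convex_hull_P2_if_shutdown assms q by blast
  next
    case 2
    have "(x2, x1, y2, y1) \<in> convex hull (P2 Cu Cl V Vb)"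
      using Q2_mem_convex_hull_P2_if_shutdown assms swap_periods_mem_Q2[OF q] 2 by simp
    then have "swap_periods (x2, x1, y2, y1) \<in> swap_periods ` (convex hull (P2 Cu Cl V Vb))"
      by (rule imageI)
    then show ?thesis
      by (simp add: swap_periods_image_convex_hull_P2)
  qed
qed

theorem theorem1:
  fixes Cu Cl V Vb :: real
  assumes "Cu > Cl" and "Cl > 0" and "V > 0" and "Vb + V \<le> Cu"
    and "Cl < Vb" and "Vb < Cl + V"
  shows "Q2 Cu Cl V Vb = convex hull (P2 Cu Cl V Vb)"
proof
  show "Q2 Cu Cl V Vb \<subseteq> convex hull (P2 Cu Cl V Vb)"
    using assms by (intro Q2_subset_convex_hull_P2) auto
  show "convex hull (P2 Cu Cl V Vb) \<subseteq> Q2 Cu Cl V Vb"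
    using assms by (intro convex_hull_P2_subset_Q2) auto
qed

end
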